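(* Let $\mathbb{K}$ be an infinite field of characteristic zero and $\Delta$ a pure simplicial complex on vertex set $[n]$ (each $\{i\}$ a face) with at least as many facets as vertices. If the facet ideal $\mathcal{F}(\Delta)\subset\mathbb{K}[x_1,\dots,x_n]$ is normally torsion-free, then $A(\Delta)$ fails the strong Lefschetz property.
   Context: Let $S=\mathbb{K}[x_1,\dots,x_n]$. $\mathcal{F}(\Delta)=(x_F:F\text{ a facet of }\Delta)$ and $\mathcal{N}(\Delta)=(x_\tau:\tau\subseteq[n],\ \tau\notin\Delta)$ with $x_\tau=\prod_{j\in\tau}x_j$; $A(\Delta)=S/(\mathcal{N}(\Delta)+(x_1^2,\dots,x_n^2))$. A graded artinian algebra $A$ has the strong Lefschetz property if for a general linear form $L$ all maps $\times L^j:A_i\to A_{i+j}$ have full rank. For a squarefree monomial ideal $I$, the $m$-th symbolic power is $I^{(m)}=\bigcap_{P\in\mathrm{Ass}(I)}P^m$; $I$ is normally torsion-free if $I^{(m)}=I^m$ for all $m\ge1$. *)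

theory Defs
  imports Main "HOL-Library.Poly_Mapping"
begin

text \<open>A polynomial over 'k in variables x_0, x_1, ... is a finitely supported map from
  monomials (exponent vectors, nat =>0 nat) to coefficients.\<close>

type_synonym 'k mpoly = "(nat \<Rightarrow>\<^sub>0 nat) \<Rightarrow>\<^sub>0 'k"

definition var :: "nat \<Rightarrow> 'k::comm_ring_1 mpoly" where
  "var i = Poly_Mapping.single (Poly_Mapping.single i 1) 1"

definition const :: "'k::comm_ring_1 \<Rightarrow> 'k mpoly" where
  "const c = Poly_Mapping.single 0 c"

definition xset :: "nat set \<Rightarrow> 'k::comm_ring_1 mpoly" where
  "xset \<tau> = (\<Prod>j\<in>\<tau>. var j)"

definition polyring :: "nat \<Rightarrow> 'k::comm_ring_1 mpoly set" where
  "polyring n = {p. \<forall>m\<in>Poly_Mapping.keys p. Poly_Mapping.keys m \<subseteq> {1..n}}"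

definition mdeg :: "(nat \<Rightarrow>\<^sub>0 nat) \<Rightarrow> nat" where
  "mdeg m = (\<Sum>j\<in>Poly_Mapping.keys m. Poly_Mapping.lookup m j)"

definition hom :: "nat \<Rightarrow> nat \<Rightarrow> 'k::comm_ring_1 mpoly set" where
  "hom n i = {p \<in> polyring n. \<forall>m\<in>Poly_Mapping.keys p. mdeg m = i}"

definition is_ideal :: "nat \<Rightarrow> 'k::comm_ring_1 mpoly set \<Rightarrow> bool" where
  "is_ideal n I \<longleftrightarrow> I \<subseteq> polyring n \<and> 0 \<in> I \<and> (\<forall>a\<in>I. \<forall>b\<in>I. a + b \<in> I)
     \<and> (\<forall>a\<in>I. \<forall>r\<in>polyring n. r * a \<in> I)"

definition ideal_gen :: "nat \<Rightarrow> 'k::comm_ring_1 mpoly set \<Rightarrow> 'k mpoly set" where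
  "ideal_gen n G = \<Inter>{I. is_ideal n I \<and> G \<subseteq> I}"

definition ideal_pow :: "nat \<Rightarrow> 'k::comm_ring_1 mpoly set \<Rightarrow> nat \<Rightarrow> 'k mpoly set" where
  "ideal_pow n I m = ideal_gen n {prod_list xs | xs. length xs = m \<and> set xs \<subseteq> I}"

definition is_prime_ideal :: "nat \<Rightarrow> 'k::comm_ring_1 mpoly set \<Rightarrow> bool" where
  "is_prime_ideal n P \<longleftrightarrow> is_ideal n P \<and> P \<noteq> polyring n \<and>
     (\<forall>a\<in>polyring n. \<forall>b\<in>polyring n. a * b \<in> P \<longrightarrow> a \<in> P \<or> b \<in> P)"

definition colon :: "nat \<Rightarrow> 'k::comm_ring_1 mpoly set \<Rightarrow> 'k mpoly \<Rightarrow> 'k mpoly set" where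
  "colon n I f = {r \<in> polyring n. r * f \<in> I}"

definition Ass :: "nat \<Rightarrow> 'k::comm_ring_1 mpoly set \<Rightarrow> 'k mpoly set set" where
  "Ass n I = {P. is_prime_ideal n P \<and> (\<exists>f\<in>polyring n. P = colon n I f)}"

text \<open>Symbolic power I^(m) = intersection of P^m over P in Ass(I) (as in the paper,
  for squarefree monomial ideals); intersected with S so that it is S when Ass(I) is empty.\<close>
definition symb_pow :: "nat \<Rightarrow> 'k::comm_ring_1 mpoly set \<Rightarrow> nat \<Rightarrow> 'k mpoly set" where
  "symb_pow n I m = polyring n \<inter> (\<Inter>P\<in>Ass n I. ideal_pow n P m)"

definition normally_torsion_free :: "nat \<Rightarrow> 'k::comm_ring_1 mpoly set \<Rightarrow> bool" where
  "normally_torsion_free n I \<longleftrightarrow> (\<forall>m\<ge>1. symb_pow n I m = ideal_pow n I m)"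

definition simplicial_complex :: "nat \<Rightarrow> nat set set \<Rightarrow> bool" where
  "simplicial_complex n \<Delta> \<longleftrightarrow> (\<forall>F\<in>\<Delta>. F \<subseteq> {1..n}) \<and> (\<forall>F\<in>\<Delta>. \<forall>G. G \<subseteq> F \<longrightarrow> G \<in> \<Delta>)
     \<and> (\<forall>i\<in>{1..n}. {i} \<in> \<Delta>)"

definition facets :: "nat set set \<Rightarrow> nat set set" where
  "facets \<Delta> = {F \<in> \<Delta>. \<forall>G\<in>\<Delta>. F \<subseteq> G \<longrightarrow> G = F}"

definition pure :: "nat set set \<Rightarrow> bool" where
  "pure \<Delta> \<longleftrightarrow> (\<forall>F\<in>facets \<Delta>. \<forall>G\<in>facets \<Delta>. card F = card G)"

definition facet_ideal :: "nat \<Rightarrow> nat set set \<Rightarrow> 'k::comm_ring_1 mpoly set" where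
  "facet_ideal n \<Delta> = ideal_gen n (xset ` facets \<Delta>)"

definition nonface_ideal :: "nat \<Rightarrow> nat set set \<Rightarrow> 'k::comm_ring_1 mpoly set" where
  "nonface_ideal n \<Delta> = ideal_gen n (xset ` {\<tau>. \<tau> \<subseteq> {1..n} \<and> \<tau> \<notin> \<Delta>})"

definition A_ideal :: "nat \<Rightarrow> nat set set \<Rightarrow> 'k::comm_ring_1 mpoly set" where
  "A_ideal n \<Delta> = ideal_gen n (xset ` {\<tau>. \<tau> \<subseteq> {1..n} \<and> \<tau> \<notin> \<Delta>} \<union> {var i ^ 2 | i. i \<in> {1..n}})"

text \<open>Multiplication by g: A_i -> A_(i+j) (g of degree j) has full (maximal) rank iff it is
  injective or surjective, written here on representatives in S.\<close>
definition full_rank_mult :: "nat \<Rightarrow> 'k::comm_ring_1 mpoly set \<Rightarrow> 'k mpoly \<Rightarrow> nat \<Rightarrow> nat \<Rightarrow> bool" where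
  "full_rank_mult n J g i k \<longleftrightarrow>
     (\<forall>f\<in>hom n i. g * f \<in> J \<longrightarrow> f \<in> J) \<or>
     (\<forall>h\<in>hom n (i + k). \<exists>f\<in>hom n i. h - g * f \<in> J)"

definition linear_forms :: "nat \<Rightarrow> 'k::comm_ring_1 mpoly set" where
  "linear_forms n = {(\<Sum>i\<in>{1..n}. const (c i) * var i) | c. True}"

text \<open>Over an infinite field, "a general linear form L has all maps x L^j of full rank"
  is equivalent to the existence of one such L (full rank is a Zariski-open condition,
  and only finitely many pairs (i,j) are nontrivial since A is artinian).\<close>
definition strong_lefschetz :: "nat \<Rightarrow> 'k::comm_ring_1 mpoly set \<Rightarrow> bool" where
  "strong_lefschetz n J \<longleftrightarrow>
     (\<exists>L\<in>linear_forms n. \<forall>i j. full_rank_mult n J (L ^ j) i j)"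

end

theory Submission
  imports Defs Jordan_Normal_Form.Determinant
begin

(*
  The squarefree monomials x_\<sigma>, \<sigma> a face, form a basis of A(\<Delta>); so A_1 has dimension n and,
  \<Delta> being pure with facets of size d, the m \<ge> n facets form a basis of A_d.

  If F(\<Delta>) is normally torsion-free, some vertex set C meets every facet exactly once.
  Otherwise, for each associated prime P the variables lying in P hit every facet, and at
  least m + 1 times in total; hence the product g of the m facet monomials lies in every
  P^(m+1), i.e. in the symbolic power F(\<Delta>)^(m+1), which equals the ordinary one.  But
  every term of an element of F(\<Delta>)^(m+1) has degree at least (m + 1) d > m d = deg g.

  For L = \<Sum> c_i x_i the map \<times>L^(d-1): A_1 \<rightarrow> A_d sends x_i to
  (d-1)! \<Sum>_{F \<ni> i} (\<Prod>_{j \<in> F - i} c_j) x_F, and v_i = c_i (d [i \<in> C] - 1) is a nonzero kernel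
  vector (every vector is one if L = 0), since d \<ge> 2 and the characteristic is 0.  So the
  map is not injective and, as n \<le> m, not surjective either.
*)

definition sqfree_monom :: "nat set \<Rightarrow> (nat \<Rightarrow>\<^sub>0 nat)" where
  "sqfree_monom \<sigma> = (\<Sum>i\<in>\<sigma>. Poly_Mapping.single i 1)"

lemma lookup_sqfree_monom:
  "finite \<sigma> \<Longrightarrow> Poly_Mapping.lookup (sqfree_monom \<sigma>) i = (if i \<in> \<sigma> then 1 else 0)"
  unfolding sqfree_monom_def lookup_sum by (simp add: lookup_single when_def)

lemma keys_sqfree_monom [simp]: "finite \<sigma> \<Longrightarrow> Poly_Mapping.keys (sqfree_monom \<sigma>) = \<sigma>"
  by (auto simp: in_keys_iff lookup_sqfree_monom split: if_splits)

lemma sqfree_monom_inject: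
  "finite \<sigma> \<Longrightarrow> finite \<tau> \<Longrightarrow> sqfree_monom \<sigma> = sqfree_monom \<tau> \<longleftrightarrow> \<sigma> = \<tau>"
  by (metis keys_sqfree_monom)

lemma sqfree_monom_eq_0_iff:
  assumes "finite \<sigma>"
  shows "sqfree_monom \<sigma> = 0 \<longleftrightarrow> \<sigma> = {}"
  using keys_sqfree_monom[OF assms] by (auto simp: sqfree_monom_def)

lemma sqfree_monom_singleton: "sqfree_monom {i} = Poly_Mapping.single i 1"
  by (simp add: sqfree_monom_def)

lemma single_1_eq_iff: "Poly_Mapping.single i (1::nat) = Poly_Mapping.single j 1 \<longleftrightarrow> i = j"
  by (metis keys_single one_neq_zero singleton_inject)

lemma sqfree_monom_keys:
  assumes "\<And>i. Poly_Mapping.lookup a i \<le> 1"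
  shows "a = sqfree_monom (Poly_Mapping.keys a)"
proof (rule poly_mapping_eqI)
  fix i
  show "Poly_Mapping.lookup a i = Poly_Mapping.lookup (sqfree_monom (Poly_Mapping.keys a)) i"
    using assms[of i] by (simp add: lookup_sqfree_monom in_keys_iff)
qed

lemma sqfree_monom_summand:
  assumes "finite \<sigma>" "sqfree_monom \<sigma> = l + q"
  shows "Poly_Mapping.keys q \<subseteq> \<sigma>" "q = sqfree_monom (Poly_Mapping.keys q)"
proof -
  have lookup: "Poly_Mapping.lookup (sqfree_monom \<sigma>) i
      = Poly_Mapping.lookup l i + Poly_Mapping.lookup q i" for i
    using assms(2) by (simp add: lookup_add)
  show "Poly_Mapping.keys q \<subseteq> \<sigma>"
    using lookup assms(1) by (force simp: in_keys_iff lookup_sqfree_monom split: if_splits)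
  have "Poly_Mapping.lookup q i \<le> 1" for i
    using lookup[of i] assms(1) by (simp add: lookup_sqfree_monom split: if_splits)
  then show "q = sqfree_monom (Poly_Mapping.keys q)"
    by (rule sqfree_monom_keys)
qed

lemma xset_eq_single: "xset \<sigma> = (Poly_Mapping.single (sqfree_monom \<sigma>) 1 :: 'k::comm_ring_1 mpoly)"
proof (cases "finite \<sigma>")
  case True
  then show ?thesis
    by (induction rule: finite_induct) (simp_all add: xset_def sqfree_monom_def var_def mult_single)
qed (simp add: xset_def sqfree_monom_def)

lemma prod_single_one:
  "(\<Prod>x\<in>A. Poly_Mapping.single (h x) (1::'k::comm_semiring_1)) = Poly_Mapping.single (\<Sum>x\<in>A. h x) 1"
  by (induction A rule: infinite_finite_induct) (simp_all add: mult_single)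

lemma mdeg_eq_sum: "finite S \<Longrightarrow> Poly_Mapping.keys m \<subseteq> S \<Longrightarrow> mdeg m = sum (Poly_Mapping.lookup m) S"
  unfolding mdeg_def by (rule sum.mono_neutral_left) (auto simp: in_keys_iff)

lemma mdeg_add: "mdeg (a + b) = mdeg a + mdeg b"
proof -
  let ?S = "Poly_Mapping.keys a \<union> Poly_Mapping.keys b"
  have "mdeg (a + b) = sum (Poly_Mapping.lookup (a + b)) ?S"
    by (rule mdeg_eq_sum) (auto simp: in_keys_iff lookup_add)
  also have "\<dots> = mdeg a + mdeg b"
    using mdeg_eq_sum[of ?S a] mdeg_eq_sum[of ?S b] by (simp add: lookup_add sum.distrib)
  finally show ?thesis .
qed

lemma mdeg_zero [simp]: "mdeg 0 = 0"
  by (simp add: mdeg_def)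

lemma mdeg_sum: "mdeg (sum f A) = (\<Sum>x\<in>A. mdeg (f x))"
  by (induction A rule: infinite_finite_induct) (simp_all add: mdeg_add)

lemma mdeg_single [simp]: "mdeg (Poly_Mapping.single i k) = k"
  by (cases "k = 0") (simp_all add: mdeg_def)

lemma mdeg_sqfree_monom: "finite \<sigma> \<Longrightarrow> mdeg (sqfree_monom \<sigma>) = card \<sigma>"
  by (simp add: sqfree_monom_def mdeg_sum)

lemma mdeg_eq_1_imp_single:
  assumes "mdeg m = 1"
  obtains j where "m = Poly_Mapping.single j 1"
proof -
  obtain j where j: "j \<in> Poly_Mapping.keys m"
    using assms by (fastforce simp: mdeg_def)
  have "mdeg m = Poly_Mapping.lookup m j + (\<Sum>i\<in>Poly_Mapping.keys m - {j}. Poly_Mapping.lookup m i)"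
    unfolding mdeg_def using j by (simp add: sum.remove)
  moreover have "Poly_Mapping.lookup m j \<ge> 1"
    using j by (simp add: in_keys_iff)
  ultimately have at_j: "Poly_Mapping.lookup m j = 1"
    and elsewhere: "\<forall>i\<in>Poly_Mapping.keys m - {j}. Poly_Mapping.lookup m i = 0"
    using assms by auto
  have "Poly_Mapping.lookup m i = Poly_Mapping.lookup (Poly_Mapping.single j 1) i" for i
  proof (cases "i = j")
    case False
    with elsewhere have "Poly_Mapping.lookup m i = 0"
      by (metis DiffI in_keys_iff singletonD)
    with False show ?thesis
      by (simp add: lookup_single)
  qed (simp add: at_j)
  then show thesis
    by (intro that poly_mapping_eqI)
qed

lemma poly_mapping_sum_monomials:
  "p = (\<Sum>a\<in>Poly_Mapping.keys p. Poly_Mapping.single a (Poly_Mapping.lookup p a))"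
  by (rule poly_mapping_eqI) (simp add: lookup_sum lookup_single when_def sum.delta in_keys_iff)

lemma lookup_const_mult: "Poly_Mapping.lookup (const c * p) k = c * Poly_Mapping.lookup p k"
proof -
  have "(\<lambda>q. Poly_Mapping.lookup p q when k = 0 + q) = (\<lambda>q. Poly_Mapping.lookup p q when q = k)"
    by (auto simp: when_def)
  then show ?thesis
    by (simp add: const_def lookup_mult lookup_single when_mult)
qed

lemma lookup_var_mult_sqfree_monom:
  assumes "finite \<sigma>"
  shows "Poly_Mapping.lookup (var i * p) (sqfree_monom \<sigma>)
       = (if i \<in> \<sigma> then Poly_Mapping.lookup p (sqfree_monom (\<sigma> - {i})) else 0)"
proof -
  have "Poly_Mapping.lookup (var i * p) (sqfree_monom \<sigma>)
      = Sum_any (\<lambda>q. Poly_Mapping.lookup p q when sqfree_monom \<sigma> = Poly_Mapping.single i 1 + q)"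
    by (simp add: var_def lookup_mult lookup_single when_mult)
  also have "\<dots> = (if i \<in> \<sigma> then Poly_Mapping.lookup p (sqfree_monom (\<sigma> - {i})) else 0)"
  proof (cases "i \<in> \<sigma>")
    case True
    then have "sqfree_monom \<sigma> = Poly_Mapping.single i 1 + sqfree_monom (\<sigma> - {i})"
      using assms by (simp add: sqfree_monom_def sum.remove)
    then show ?thesis
      using True by (simp add: when_def)
  next
    case False
    have "sqfree_monom \<sigma> \<noteq> Poly_Mapping.single i 1 + q" for q
    proof
      assume "sqfree_monom \<sigma> = Poly_Mapping.single i 1 + q"
      then have "Poly_Mapping.lookup (sqfree_monom \<sigma>) i = 1 + Poly_Mapping.lookup q i"
        by (simp add: lookup_add)
      with False assms show False by (simp add: lookup_sqfree_monom)
    qed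
    with False show ?thesis by simp
  qed
  finally show ?thesis .
qed

lemma var_power_2: "(var i :: 'k::comm_ring_1 mpoly) ^ 2 = Poly_Mapping.single (Poly_Mapping.single i 2) 1"
  by (simp add: power2_eq_square var_def mult_single flip: single_add one_add_one)

lemma polyring_iff: "p \<in> polyring n \<longleftrightarrow> (\<forall>m\<in>Poly_Mapping.keys p. Poly_Mapping.keys m \<subseteq> {1..n})"
  by (simp add: polyring_def)

lemma polyring_zero [simp]: "0 \<in> polyring n"
  and polyring_one [simp]: "1 \<in> polyring n"
  by (simp_all add: polyring_def)

lemma polyring_single: "Poly_Mapping.keys a \<subseteq> {1..n} \<Longrightarrow> Poly_Mapping.single a c \<in> polyring n"
  by (simp add: polyring_def)

lemma polyring_const [simp]: "const c \<in> polyring n"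
  by (simp add: const_def polyring_single)

lemma polyring_var: "i \<in> {1..n} \<Longrightarrow> var i \<in> polyring n"
  by (simp add: var_def polyring_single)

lemma polyring_add: "p \<in> polyring n \<Longrightarrow> q \<in> polyring n \<Longrightarrow> p + q \<in> polyring n"
  unfolding polyring_iff by (meson Un_iff keys_add subsetD)

lemma polyring_mult:
  assumes "p \<in> polyring n" "q \<in> polyring n"
  shows "p * q \<in> polyring n"
  unfolding polyring_iff
proof
  fix m assume "m \<in> Poly_Mapping.keys (p * q)"
  then obtain a b where "m = a + b" "a \<in> Poly_Mapping.keys p" "b \<in> Poly_Mapping.keys q"
    using keys_mult by blast
  with assms show "Poly_Mapping.keys m \<subseteq> {1..n}"
    unfolding polyring_iff by (meson Un_least keys_add subset_trans)
qed

lemma polyring_sum: "(\<And>x. x \<in> A \<Longrightarrow> f x \<in> polyring n) \<Longrightarrow> sum f A \<in> polyring n"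
  by (induction A rule: infinite_finite_induct) (auto intro: polyring_add)

lemma polyring_prod: "(\<And>x. x \<in> A \<Longrightarrow> f x \<in> polyring n) \<Longrightarrow> prod f A \<in> polyring n"
  by (induction A rule: infinite_finite_induct) (auto intro: polyring_mult)

lemma polyring_prod_list: "set xs \<subseteq> polyring n \<Longrightarrow> prod_list xs \<in> polyring n"
  by (induction xs) (simp_all add: polyring_mult)

lemma polyring_power: "p \<in> polyring n \<Longrightarrow> p ^ k \<in> polyring n"
  by (induction k) (auto intro: polyring_mult)

lemma polyring_xset: "\<sigma> \<subseteq> {1..n} \<Longrightarrow> xset \<sigma> \<in> polyring n"
  unfolding xset_def by (rule polyring_prod) (simp add: polyring_var subset_iff)

lemma xset_in_hom: "\<sigma> \<subseteq> {1..n} \<Longrightarrow> xset \<sigma> \<in> Defs.hom n (card \<sigma>)"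
  using finite_subset[of \<sigma> "{1..n}"] polyring_xset[of \<sigma> n]
  by (simp add: Defs.hom_def xset_eq_single mdeg_sqfree_monom)

lemma is_ideal_polyring: "is_ideal n (polyring n)"
  unfolding is_ideal_def by (auto intro: polyring_add polyring_mult)

lemma ideal_subset_polyring: "is_ideal n I \<Longrightarrow> I \<subseteq> polyring n"
  by (simp add: is_ideal_def)

lemma ideal_mult_left: "is_ideal n I \<Longrightarrow> a \<in> I \<Longrightarrow> r \<in> polyring n \<Longrightarrow> r * a \<in> I"
  by (simp add: is_ideal_def)

lemma ideal_mult_right: "is_ideal n I \<Longrightarrow> a \<in> I \<Longrightarrow> r \<in> polyring n \<Longrightarrow> a * r \<in> I"
  by (simp add: is_ideal_def mult.commute)

lemma ideal_sum: "is_ideal n I \<Longrightarrow> (\<And>x. x \<in> A \<Longrightarrow> f x \<in> I) \<Longrightarrow> sum f A \<in> I"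
  by (induction A rule: infinite_finite_induct) (auto simp: is_ideal_def)

lemma is_ideal_ideal_gen:
  assumes "G \<subseteq> polyring n"
  shows "is_ideal n (ideal_gen n G)"
proof -
  let ?S = "{I. is_ideal n I \<and> G \<subseteq> I}"
  have "polyring n \<in> ?S"
    using assms is_ideal_polyring by simp
  then have "\<Inter> ?S \<subseteq> polyring n"
    by (rule Inter_lower)
  moreover have "0 \<in> \<Inter> ?S"
    by (simp add: is_ideal_def)
  moreover have "a + b \<in> \<Inter> ?S" if "a \<in> \<Inter> ?S" "b \<in> \<Inter> ?S" for a b
    using that by (simp add: is_ideal_def)
  moreover have "r * a \<in> \<Inter> ?S" if "a \<in> \<Inter> ?S" "r \<in> polyring n" for a r
    using that by (simp add: is_ideal_def)
  ultimately show ?thesis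
    unfolding is_ideal_def ideal_gen_def by blast
qed

lemma ideal_gen_subset: "is_ideal n I \<Longrightarrow> G \<subseteq> I \<Longrightarrow> ideal_gen n G \<subseteq> I"
  unfolding ideal_gen_def by (rule Inter_lower) simp

lemma generator_in_ideal_gen: "g \<in> G \<Longrightarrow> g \<in> ideal_gen n G"
  unfolding ideal_gen_def by blast

lemma is_ideal_ideal_pow:
  assumes "is_ideal n P"
  shows "is_ideal n (ideal_pow n P k)"
  unfolding ideal_pow_def
  by (rule is_ideal_ideal_gen)
     (use ideal_subset_polyring[OF assms] in \<open>auto intro!: polyring_prod_list\<close>)

lemma prod_list_in_ideal_pow: "length xs = k \<Longrightarrow> set xs \<subseteq> P \<Longrightarrow> prod_list xs \<in> ideal_pow n P k"
  unfolding ideal_pow_def by (rule generator_in_ideal_gen) blast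

lemma prod_in_ideal_pow:
  assumes P: "is_ideal n P" and A: "finite A" "k \<le> card A" and f: "\<And>x. x \<in> A \<Longrightarrow> f x \<in> P"
  shows "prod f A \<in> ideal_pow n P k"
proof -
  obtain xs where xs: "set xs = A" "distinct xs"
    using finite_distinct_list[OF A(1)] by blast
  let ?ys = "map f xs"
  have prod_eq: "prod f A = prod_list (take k ?ys) * prod_list (drop k ?ys)"
    using xs by (metis prod.distinct_set_conv_list prod_list.append append_take_drop_id)
  have "set ?ys \<subseteq> P"
    using f xs by auto
  then have "prod_list (take k ?ys) \<in> ideal_pow n P k"
    using xs A distinct_card[OF xs(2)] set_take_subset[of k ?ys]
    by (intro prod_list_in_ideal_pow) auto
  moreover have "prod_list (drop k ?ys) \<in> polyring n"
    using \<open>set ?ys \<subseteq> P\<close> ideal_subset_polyring[OF P] set_drop_subset[of k ?ys]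
    by (intro polyring_prod_list) blast
  ultimately show ?thesis
    using prod_eq ideal_mult_right[OF is_ideal_ideal_pow[OF P]] by simp
qed

lemma prime_ideal_contains_var:
  fixes P :: "'k::comm_ring_1 mpoly set"
  assumes P: "is_prime_ideal n P" and A: "finite A" "A \<subseteq> {1..n}" and "xset A \<in> P"
  shows "\<exists>i\<in>A. var i \<in> P"
  using A \<open>xset A \<in> P\<close> unfolding xset_def
proof (induction A rule: finite_induct)
  case empty
  then have "polyring n \<subseteq> P"
    using ideal_mult_right[of n P 1] P by (auto simp: is_prime_ideal_def)
  with P show ?case
    using ideal_subset_polyring by (auto simp: is_prime_ideal_def)
next
  case (insert a A)
  have "var a \<in> polyring n" "(\<Prod>i\<in>A. var i) \<in> polyring n"
    using insert.prems by (auto intro!: polyring_var polyring_prod)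
  with P insert show ?case
    unfolding is_prime_ideal_def by auto
qed

lemma Ass_superset:
  assumes "is_ideal n I" "P \<in> Ass n I"
  shows "I \<subseteq> P"
  using assms ideal_subset_polyring[OF assms(1)] ideal_mult_right[OF assms(1)]
  by (auto simp: Ass_def colon_def)

lemma simplicial_complex_face_subset: "simplicial_complex n \<Delta> \<Longrightarrow> \<sigma> \<in> \<Delta> \<Longrightarrow> \<sigma> \<subseteq> {1..n}"
  by (simp add: simplicial_complex_def)

lemma simplicial_complex_finite_face: "simplicial_complex n \<Delta> \<Longrightarrow> \<sigma> \<in> \<Delta> \<Longrightarrow> finite \<sigma>"
  using finite_subset[OF simplicial_complex_face_subset] by blast

lemma simplicial_complex_downward_closed:
  "simplicial_complex n \<Delta> \<Longrightarrow> \<sigma> \<in> \<Delta> \<Longrightarrow> \<tau> \<subseteq> \<sigma> \<Longrightarrow> \<tau> \<in> \<Delta>"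
  by (simp add: simplicial_complex_def)

lemma simplicial_complex_singleton: "simplicial_complex n \<Delta> \<Longrightarrow> i \<in> {1..n} \<Longrightarrow> {i} \<in> \<Delta>"
  by (simp add: simplicial_complex_def)

lemma finite_simplicial_complex: "simplicial_complex n \<Delta> \<Longrightarrow> finite \<Delta>"
  using finite_subset[of \<Delta> "Pow {1..n}"] simplicial_complex_face_subset by blast

lemma facets_subset: "facets \<Delta> \<subseteq> \<Delta>"
  by (simp add: facets_def)

lemma facet_subset_vertices: "simplicial_complex n \<Delta> \<Longrightarrow> F \<in> facets \<Delta> \<Longrightarrow> F \<subseteq> {1..n}"
  using facets_subset simplicial_complex_face_subset by blast

lemma finite_facet: "simplicial_complex n \<Delta> \<Longrightarrow> F \<in> facets \<Delta> \<Longrightarrow> finite F"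
  using facets_subset simplicial_complex_finite_face by blast

lemma finite_facets: "simplicial_complex n \<Delta> \<Longrightarrow> finite (facets \<Delta>)"
  using finite_subset[OF facets_subset finite_simplicial_complex] .

lemma face_subset_facet:
  assumes "simplicial_complex n \<Delta>" "\<sigma> \<in> \<Delta>"
  obtains F where "F \<in> facets \<Delta>" "\<sigma> \<subseteq> F"
proof -
  obtain F where "F \<in> \<Delta>" "\<sigma> \<subseteq> F" "\<forall>G\<in>\<Delta>. F \<subseteq> G \<longrightarrow> F = G"
    using finite_has_maximal2[OF finite_simplicial_complex[OF assms(1)] assms(2)] by blast
  then show thesis
    using that[of F] by (auto simp: facets_def)
qed

lemma face_of_facet_size_is_facet:
  assumes sc: "simplicial_complex n \<Delta>" and pure: "\<forall>F\<in>facets \<Delta>. card F = d"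
    and \<sigma>: "\<sigma> \<in> \<Delta>" "card \<sigma> = d"
  shows "\<sigma> \<in> facets \<Delta>"
proof -
  obtain F where F: "F \<in> facets \<Delta>" "\<sigma> \<subseteq> F"
    using face_subset_facet[OF sc \<sigma>(1)] .
  have "finite F"
    using finite_facet[OF sc F(1)] .
  moreover have "card \<sigma> = card F"
    using pure F(1) \<sigma>(2) by simp
  ultimately have "\<sigma> = F"
    using card_subset_eq[of F \<sigma>] F(2) by simp
  with F(1) show ?thesis by simp
qed

section \<open>The monomial basis of \<open>A(\<Delta>)\<close>\<close>

definition without_face_terms :: "nat \<Rightarrow> nat set set \<Rightarrow> 'k::comm_ring_1 mpoly set" where
  "without_face_terms n \<Delta> =
     {p \<in> polyring n. \<forall>\<sigma>\<in>\<Delta>. Poly_Mapping.lookup p (sqfree_monom \<sigma>) = 0}"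

lemma is_ideal_without_face_terms:
  assumes sc: "simplicial_complex n \<Delta>"
  shows "is_ideal n (without_face_terms n \<Delta> :: 'k::comm_ring_1 mpoly set)"
proof -
  have "Poly_Mapping.lookup (r * p) (sqfree_monom \<sigma>) = 0"
    if p: "p \<in> without_face_terms n \<Delta>" and \<sigma>: "\<sigma> \<in> \<Delta>" for p r :: "'k mpoly" and \<sigma>
  proof -
    have fin: "finite \<sigma>"
      using simplicial_complex_finite_face[OF sc \<sigma>] .
    have "Poly_Mapping.lookup p q = 0" if "sqfree_monom \<sigma> = l + q" for l q
    proof -
      have "Poly_Mapping.keys q \<in> \<Delta>"
        using simplicial_complex_downward_closed[OF sc \<sigma> sqfree_monom_summand(1)[OF fin that]] .
      with p show ?thesis
        using sqfree_monom_summand(2)[OF fin that] unfolding without_face_terms_def by force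
    qed
    then have "(Poly_Mapping.lookup p q when sqfree_monom \<sigma> = l + q) = 0" for l q
      by (simp add: when_def)
    then show ?thesis
      by (simp add: lookup_mult)
  qed
  then show ?thesis
    by (auto simp: is_ideal_def without_face_terms_def lookup_add intro: polyring_add polyring_mult)
qed

lemma is_ideal_A_ideal: "is_ideal n (A_ideal n \<Delta>)"
  unfolding A_ideal_def
  by (rule is_ideal_ideal_gen) (auto intro!: polyring_xset polyring_power polyring_var)

lemma A_ideal_subset_without_face_terms:
  assumes sc: "simplicial_complex n \<Delta>"
  shows "A_ideal n \<Delta> \<subseteq> (without_face_terms n \<Delta> :: 'k::comm_ring_1 mpoly set)"
  unfolding A_ideal_def
proof (rule ideal_gen_subset[OF is_ideal_without_face_terms[OF sc]], intro Un_least subsetI)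
  fix g assume "g \<in> xset ` {\<tau>. \<tau> \<subseteq> {1..n} \<and> \<tau> \<notin> \<Delta>}"
  then obtain \<tau> where \<tau>: "\<tau> \<subseteq> {1..n}" "\<tau> \<notin> \<Delta>" "g = xset \<tau>" by blast
  then have "finite \<tau>"
    using finite_subset by blast
  have "sqfree_monom \<tau> \<noteq> sqfree_monom \<sigma>" if "\<sigma> \<in> \<Delta>" for \<sigma>
    using \<tau>(2) that sqfree_monom_inject[OF \<open>finite \<tau>\<close> simplicial_complex_finite_face[OF sc that]]
    by blast
  then show "g \<in> without_face_terms n \<Delta>"
    using \<tau> polyring_xset[OF \<tau>(1)]
    by (simp add: without_face_terms_def xset_eq_single lookup_single when_def)
next
  fix g :: "'k mpoly" assume "g \<in> {var i ^ 2 |i. i \<in> {1..n}}"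
  then obtain i where i: "i \<in> {1..n}" "g = var i ^ 2" by blast
  have "Poly_Mapping.single i 2 \<noteq> sqfree_monom \<sigma>" if "\<sigma> \<in> \<Delta>" for \<sigma>
  proof
    assume "Poly_Mapping.single i 2 = sqfree_monom \<sigma>"
    then have "Poly_Mapping.lookup (Poly_Mapping.single i 2) i = Poly_Mapping.lookup (sqfree_monom \<sigma>) i"
      by simp
    with simplicial_complex_finite_face[OF sc that] show False
      by (simp add: lookup_sqfree_monom split: if_splits)
  qed
  then show "g \<in> without_face_terms n \<Delta>"
    using i polyring_power[OF polyring_var[OF i(1)], of 2]
    by (simp add: without_face_terms_def var_power_2 lookup_single when_def)
qed

lemma monomial_in_A_ideal:
  assumes a: "Poly_Mapping.keys a \<subseteq> {1..n}" and not_face: "\<forall>\<sigma>\<in>\<Delta>. a \<noteq> sqfree_monom \<sigma>"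
  shows "(Poly_Mapping.single a c :: 'k::comm_ring_1 mpoly) \<in> A_ideal n \<Delta>"
proof (cases "\<exists>i. Poly_Mapping.lookup a i \<ge> 2")
  case True
  then obtain i where i: "Poly_Mapping.lookup a i \<ge> 2" by blast
  define b where "b = a - Poly_Mapping.single i 2"
  have "i \<in> {1..n}"
    using i a by (metis in_keys_iff not_numeral_le_zero subsetD)
  then have "var i ^ 2 \<in> A_ideal n \<Delta>"
    unfolding A_ideal_def by (intro generator_in_ideal_gen) blast
  moreover have a_eq: "a = b + Poly_Mapping.single i 2"
    using i by (intro poly_mapping_eqI) (auto simp: b_def lookup_add lookup_minus lookup_single when_def)
  then have "Poly_Mapping.keys b \<subseteq> {1..n}"
    using a by (auto simp: in_keys_iff lookup_add)
  ultimately have "Poly_Mapping.single b c * (var i ^ 2 :: 'k mpoly) \<in> A_ideal n \<Delta>"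
    by (intro ideal_mult_left[OF is_ideal_A_ideal] polyring_single)
  then show ?thesis
    by (simp add: a_eq var_power_2 mult_single)
next
  case False
  have "Poly_Mapping.lookup a i \<le> 1" for i
  proof -
    have "\<not> 2 \<le> Poly_Mapping.lookup a i"
      using False by blast
    then show ?thesis by linarith
  qed
  then have a_eq: "a = sqfree_monom (Poly_Mapping.keys a)"
    by (rule sqfree_monom_keys)
  then have "xset (Poly_Mapping.keys a) \<in> A_ideal n \<Delta>"
    using a not_face unfolding A_ideal_def by (intro generator_in_ideal_gen) blast
  then have "const c * (xset (Poly_Mapping.keys a) :: 'k mpoly) \<in> A_ideal n \<Delta>"
    by (intro ideal_mult_left[OF is_ideal_A_ideal] polyring_const)
  then show ?thesis
    by (subst a_eq) (simp add: xset_eq_single const_def mult_single)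
qed

lemma A_ideal_eq:
  assumes sc: "simplicial_complex n \<Delta>"
  shows "A_ideal n \<Delta> = (without_face_terms n \<Delta> :: 'k::comm_ring_1 mpoly set)"
proof (rule subset_antisym)
  show "without_face_terms n \<Delta> \<subseteq> (A_ideal n \<Delta> :: 'k mpoly set)"
  proof
    fix p :: "'k mpoly" assume p: "p \<in> without_face_terms n \<Delta>"
    have "(\<Sum>a\<in>Poly_Mapping.keys p. Poly_Mapping.single a (Poly_Mapping.lookup p a)) \<in> A_ideal n \<Delta>"
    proof (rule ideal_sum[OF is_ideal_A_ideal])
      fix a assume "a \<in> Poly_Mapping.keys p"
      with p show "Poly_Mapping.single a (Poly_Mapping.lookup p a) \<in> A_ideal n \<Delta>"
        by (intro monomial_in_A_ideal) (auto simp: without_face_terms_def polyring_iff in_keys_iff)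
    qed
    then show "p \<in> A_ideal n \<Delta>"
      by (subst poly_mapping_sum_monomials)
  qed
qed (rule A_ideal_subset_without_face_terms[OF sc])

section \<open>Normally torsion-free facet ideals have an exact transversal\<close>

definition deg_at_least :: "nat \<Rightarrow> nat \<Rightarrow> 'k::comm_ring_1 mpoly set" where
  "deg_at_least n k = {p \<in> polyring n. \<forall>a\<in>Poly_Mapping.keys p. k \<le> mdeg a}"

lemma deg_at_least_mult:
  assumes "p \<in> deg_at_least n a" "q \<in> deg_at_least n b"
  shows "p * q \<in> deg_at_least n (a + b)"
proof -
  have "a + b \<le> mdeg m" if m: "m \<in> Poly_Mapping.keys (p * q)" for m
  proof -
    obtain x y where "m = x + y" "x \<in> Poly_Mapping.keys p" "y \<in> Poly_Mapping.keys q"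
      using m keys_mult by blast
    with assms show ?thesis
      by (auto simp: deg_at_least_def mdeg_add intro: add_mono)
  qed
  with assms show ?thesis
    by (simp add: deg_at_least_def polyring_mult)
qed

lemma is_ideal_deg_at_least: "is_ideal n (deg_at_least n k :: 'k::comm_ring_1 mpoly set)"
  unfolding is_ideal_def
proof (intro conjI ballI)
  show "deg_at_least n k \<subseteq> polyring n"
    by (auto simp: deg_at_least_def)
  show "0 \<in> deg_at_least n k"
    by (simp add: deg_at_least_def)
next
  fix a b :: "'k mpoly" assume "a \<in> deg_at_least n k" "b \<in> deg_at_least n k"
  then show "a + b \<in> deg_at_least n k"
    using keys_add[of a b] by (auto simp: deg_at_least_def intro: polyring_add)
next
  fix a r :: "'k mpoly" assume "a \<in> deg_at_least n k" "r \<in> polyring n"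
  moreover have "r \<in> deg_at_least n 0"
    using \<open>r \<in> polyring n\<close> by (simp add: deg_at_least_def)
  ultimately show "r * a \<in> deg_at_least n k"
    using deg_at_least_mult[of r n 0 a k] by simp
qed

lemma prod_list_deg_at_least:
  "set xs \<subseteq> deg_at_least n k \<Longrightarrow> prod_list xs \<in> deg_at_least n (k * length xs)"
proof (induction xs)
  case Nil
  then show ?case by (simp add: deg_at_least_def)
next
  case (Cons x xs)
  then show ?case
    using deg_at_least_mult[of x n k "prod_list xs" "k * length xs"] by simp
qed

lemma ideal_pow_subset_deg_at_least:
  assumes "G \<subseteq> deg_at_least n d"
  shows "ideal_pow n (ideal_gen n G) k \<subseteq> deg_at_least n (d * k)"
proof -
  have "ideal_gen n G \<subseteq> deg_at_least n d"
    using ideal_gen_subset[OF is_ideal_deg_at_least assms] .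
  then have "prod_list xs \<in> deg_at_least n (d * k)" if "length xs = k" "set xs \<subseteq> ideal_gen n G" for xs
    using that prod_list_deg_at_least[of xs n d] by blast
  then show ?thesis
    unfolding ideal_pow_def by (intro ideal_gen_subset[OF is_ideal_deg_at_least]) blast
qed

lemma facet_product_notin_facet_ideal_power:
  assumes sc: "simplicial_complex n \<Delta>" and pure: "\<forall>F\<in>facets \<Delta>. card F = d" and "d \<ge> 1"
  shows "(\<Prod>F\<in>facets \<Delta>. xset F) \<notin>
           ideal_pow n (facet_ideal n \<Delta> :: 'k::comm_ring_1 mpoly set) (Suc (card (facets \<Delta>)))"
proof
  let ?m = "card (facets \<Delta>)" and ?a = "\<Sum>F\<in>facets \<Delta>. sqfree_monom F"
  note facet = facet_subset_vertices[OF sc] finite_facet[OF sc]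
  have "xset ` facets \<Delta> \<subseteq> (deg_at_least n d :: 'k mpoly set)"
    using facet pure by (auto simp: deg_at_least_def xset_eq_single mdeg_sqfree_monom polyring_single)
  then have "ideal_pow n (facet_ideal n \<Delta>) (Suc ?m) \<subseteq> (deg_at_least n (d * Suc ?m) :: 'k mpoly set)"
    unfolding facet_ideal_def by (rule ideal_pow_subset_deg_at_least)
  moreover assume "(\<Prod>F\<in>facets \<Delta>. xset F) \<in> (ideal_pow n (facet_ideal n \<Delta>) (Suc ?m) :: 'k mpoly set)"
  ultimately have "(\<Prod>F\<in>facets \<Delta>. xset F :: 'k mpoly) \<in> deg_at_least n (d * Suc ?m)"
    by (rule subsetD)
  moreover have "(\<Prod>F\<in>facets \<Delta>. xset F :: 'k mpoly) = Poly_Mapping.single ?a 1"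
    unfolding xset_eq_single by (rule prod_single_one)
  moreover have "mdeg ?a = ?m * d"
    using facet pure by (simp add: mdeg_sum mdeg_sqfree_monom)
  ultimately show False
    using \<open>d \<ge> 1\<close> by (simp add: deg_at_least_def)
qed

lemma facet_product_in_prime_power:
  fixes P :: "'k::comm_ring_1 mpoly set"
  assumes sc: "simplicial_complex n \<Delta>" and P: "is_prime_ideal n P"
    and facets_in_P: "facet_ideal n \<Delta> \<subseteq> P"
    and no_transversal: "\<nexists>C. \<forall>F\<in>facets \<Delta>. card (F \<inter> C) = 1"
  shows "(\<Prod>F\<in>facets \<Delta>. xset F) \<in> ideal_pow n P (Suc (card (facets \<Delta>)))"
proof -
  define C where "C = {i. var i \<in> P}"
  note fin = finite_facets[OF sc]
  note facet = facet_subset_vertices[OF sc] finite_facet[OF sc]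
  have "xset F \<in> P" if "F \<in> facets \<Delta>" for F
    using that facets_in_P unfolding facet_ideal_def by (blast intro: generator_in_ideal_gen)
  then have hit: "F \<inter> C \<noteq> {}" if "F \<in> facets \<Delta>" for F
    using prime_ideal_contains_var[OF P facet(2,1)[OF that]] that unfolding C_def by blast
  obtain F1 where F1: "F1 \<in> facets \<Delta>" "card (F1 \<inter> C) \<noteq> 1"
    using no_transversal by blast
  have "(\<Sum>F\<in>facets \<Delta>. 1) < (\<Sum>F\<in>facets \<Delta>. card (F \<inter> C))"
  proof (rule sum_strict_mono_ex1[OF fin])
    show "\<forall>F\<in>facets \<Delta>. 1 \<le> card (F \<inter> C)"
    proof
      fix F assume "F \<in> facets \<Delta>"
      then show "1 \<le> card (F \<inter> C)"
        using hit facet(2) by (simp add: Suc_le_eq card_gt_0_iff)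
    qed
    have "card (F1 \<inter> C) \<noteq> 0"
      using hit[OF F1(1)] facet(2)[OF F1(1)] by simp
    with F1 show "\<exists>F\<in>facets \<Delta>. 1 < card (F \<inter> C)"
      by (intro bexI[of _ F1]) linarith+
  qed
  then have "Suc (card (facets \<Delta>)) \<le> card (SIGMA F:facets \<Delta>. F \<inter> C)"
    using fin facet by simp
  then have vars_in_power:
    "(\<Prod>(F, i)\<in>(SIGMA F:facets \<Delta>. F \<inter> C). var i) \<in> ideal_pow n P (Suc (card (facets \<Delta>)))"
    using P fin facet by (intro prod_in_ideal_pow) (auto simp: is_prime_ideal_def C_def)
  have "xset F = (\<Prod>i\<in>F \<inter> C. var i) * xset (F - C)" if "F \<in> facets \<Delta>" for F
    using facet(2)[OF that] unfolding xset_def by (rule prod.Int_Diff)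
  then have "(\<Prod>F\<in>facets \<Delta>. xset F) = (\<Prod>F\<in>facets \<Delta>. (\<Prod>i\<in>F \<inter> C. var i) * xset (F - C))"
    by (rule prod.cong[OF refl])
  also have "\<dots> = (\<Prod>F\<in>facets \<Delta>. \<Prod>i\<in>F \<inter> C. var i) * (\<Prod>F\<in>facets \<Delta>. xset (F - C))"
    by (rule prod.distrib)
  also have "\<dots> = (\<Prod>(F, i)\<in>(SIGMA F:facets \<Delta>. F \<inter> C). var i) * (\<Prod>F\<in>facets \<Delta>. xset (F - C))"
    using fin facet by (subst prod.Sigma) auto
  also have "\<dots> \<in> ideal_pow n P (Suc (card (facets \<Delta>)))"
  proof (rule ideal_mult_right[OF is_ideal_ideal_pow vars_in_power])
    show "is_ideal n P"
      using P by (simp add: is_prime_ideal_def)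
    show "(\<Prod>F\<in>facets \<Delta>. xset (F - C)) \<in> polyring n"
      using facet(1) by (intro polyring_prod polyring_xset) blast
  qed
  finally show ?thesis .
qed

lemma normally_torsion_free_imp_exact_transversal:
  assumes sc: "simplicial_complex n \<Delta>" and pure: "\<forall>F\<in>facets \<Delta>. card F = d" and "d \<ge> 1"
    and ntf: "normally_torsion_free n (facet_ideal n \<Delta> :: 'k::comm_ring_1 mpoly set)"
  shows "\<exists>C. \<forall>F\<in>facets \<Delta>. card (F \<inter> C) = 1"
proof (rule ccontr)
  assume no_transversal: "\<nexists>C. \<forall>F\<in>facets \<Delta>. card (F \<inter> C) = 1"
  let ?I = "facet_ideal n \<Delta> :: 'k mpoly set" and ?m = "Suc (card (facets \<Delta>))"
  have I: "is_ideal n ?I"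
    unfolding facet_ideal_def using facet_subset_vertices[OF sc]
    by (blast intro: is_ideal_ideal_gen polyring_xset)
  have "(\<Prod>F\<in>facets \<Delta>. xset F) \<in> symb_pow n ?I ?m"
    unfolding symb_pow_def
  proof (intro IntI INT_I)
    show "(\<Prod>F\<in>facets \<Delta>. xset F) \<in> polyring n"
      using facet_subset_vertices[OF sc] by (blast intro: polyring_prod polyring_xset)
  next
    fix P assume "P \<in> Ass n ?I"
    then show "(\<Prod>F\<in>facets \<Delta>. xset F) \<in> ideal_pow n P ?m"
      using facet_product_in_prime_power[OF sc _ Ass_superset[OF I] no_transversal]
      by (simp add: Ass_def)
  qed
  with ntf have "(\<Prod>F\<in>facets \<Delta>. xset F) \<in> ideal_pow n ?I ?m"
    unfolding normally_torsion_free_def by simp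
  with facet_product_notin_facet_ideal_power[OF sc pure \<open>d \<ge> 1\<close>] show False
    by blast
qed

section \<open>Multiplication by powers of a linear form\<close>

definition linear_form :: "nat \<Rightarrow> (nat \<Rightarrow> 'k) \<Rightarrow> 'k::comm_ring_1 mpoly" where
  "linear_form n c = (\<Sum>i\<in>{1..n}. const (c i) * var i)"

lemma linear_forms_iff: "L \<in> linear_forms n \<longleftrightarrow> (\<exists>c. L = linear_form n c)"
  by (simp add: linear_forms_def linear_form_def)

lemma lookup_linear_form_mult:
  assumes "\<sigma> \<subseteq> {1..n}"
  shows "Poly_Mapping.lookup (linear_form n a * p) (sqfree_monom \<sigma>)
       = (\<Sum>i\<in>\<sigma>. a i * Poly_Mapping.lookup p (sqfree_monom (\<sigma> - {i})))"
proof -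
  have fin: "finite \<sigma>"
    using assms finite_subset by blast
  have "Poly_Mapping.lookup (linear_form n a * p) (sqfree_monom \<sigma>)
      = (\<Sum>i\<in>{1..n}. if i \<in> \<sigma> then a i * Poly_Mapping.lookup p (sqfree_monom (\<sigma> - {i})) else 0)"
    unfolding linear_form_def sum_distrib_right lookup_sum mult.assoc lookup_const_mult
      lookup_var_mult_sqfree_monom[OF fin] by (intro sum.cong) auto
  also have "\<dots> = (\<Sum>i\<in>\<sigma>. a i * Poly_Mapping.lookup p (sqfree_monom (\<sigma> - {i})))"
    using assms by (simp add: sum.If_cases Int_absorb1)
  finally show ?thesis .
qed

lemma card_Diff_singleton_eq_Suc_iff:
  "finite A \<Longrightarrow> x \<in> A \<Longrightarrow> card (A - {x}) = k \<longleftrightarrow> card A = Suc k"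
  by (metis card_Suc_Diff1 nat.inject)

lemma lookup_linear_form_power:
  assumes "\<sigma> \<subseteq> {1..n}"
  shows "Poly_Mapping.lookup (linear_form n c ^ k) (sqfree_monom \<sigma>)
       = (if card \<sigma> = k then of_nat (fact k) * (\<Prod>j\<in>\<sigma>. c j) else 0)"
  using assms
proof (induction k arbitrary: \<sigma>)
  case 0
  then have "finite \<sigma>"
    using finite_subset by blast
  then show ?case
    by (simp add: lookup_one when_def sqfree_monom_eq_0_iff)
next
  case (Suc k)
  have fin: "finite \<sigma>"
    using Suc.prems finite_subset by blast
  have "Poly_Mapping.lookup (linear_form n c ^ Suc k) (sqfree_monom \<sigma>)
      = (\<Sum>i\<in>\<sigma>. c i * Poly_Mapping.lookup (linear_form n c ^ k) (sqfree_monom (\<sigma> - {i})))"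
    using Suc.prems by (simp add: lookup_linear_form_mult)
  also have "\<dots> = (\<Sum>i\<in>\<sigma>. c i * (if card (\<sigma> - {i}) = k then of_nat (fact k) * (\<Prod>j\<in>\<sigma> - {i}. c j) else 0))"
  proof (rule sum.cong[OF refl])
    fix i
    have "\<sigma> - {i} \<subseteq> {1..n}"
      using Suc.prems by blast
    then show "c i * Poly_Mapping.lookup (linear_form n c ^ k) (sqfree_monom (\<sigma> - {i}))
        = c i * (if card (\<sigma> - {i}) = k then of_nat (fact k) * (\<Prod>j\<in>\<sigma> - {i}. c j) else 0)"
      by (simp only: Suc.IH)
  qed
  also have "\<dots> = (\<Sum>i\<in>\<sigma>. if card \<sigma> = Suc k then of_nat (fact k) * (\<Prod>j\<in>\<sigma>. c j) else 0)"
  proof (rule sum.cong[OF refl])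
    fix i assume "i \<in> \<sigma>"
    with fin have "card (\<sigma> - {i}) = k \<longleftrightarrow> card \<sigma> = Suc k"
      and "(\<Prod>j\<in>\<sigma>. c j) = c i * (\<Prod>j\<in>\<sigma> - {i}. c j)"
      by (simp_all only: card_Diff_singleton_eq_Suc_iff prod.remove)
    then show "c i * (if card (\<sigma> - {i}) = k then of_nat (fact k) * (\<Prod>j\<in>\<sigma> - {i}. c j) else 0)
        = (if card \<sigma> = Suc k then of_nat (fact k) * (\<Prod>j\<in>\<sigma>. c j) else 0)"
      by (simp only:) (simp add: ac_simps)
  qed
  also have "\<dots> = (if card \<sigma> = Suc k then of_nat (fact (Suc k)) * (\<Prod>j\<in>\<sigma>. c j) else 0)"
    by (simp add: fact_Suc algebra_simps)
  finally show ?case .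
qed

lemma lookup_linear_form_power_mult:
  assumes "\<sigma> \<subseteq> {1..n}"
  shows "Poly_Mapping.lookup (linear_form n c ^ k * linear_form n a) (sqfree_monom \<sigma>)
       = (if card \<sigma> = Suc k then of_nat (fact k) * (\<Sum>i\<in>\<sigma>. a i * (\<Prod>j\<in>\<sigma> - {i}. c j)) else 0)"
proof -
  have fin: "finite \<sigma>"
    using assms finite_subset by blast
  have "Poly_Mapping.lookup (linear_form n c ^ k * linear_form n a) (sqfree_monom \<sigma>)
      = (\<Sum>i\<in>\<sigma>. a i * Poly_Mapping.lookup (linear_form n c ^ k) (sqfree_monom (\<sigma> - {i})))"
    using assms by (simp add: mult.commute[of "linear_form n c ^ k"] lookup_linear_form_mult)
  also have "\<dots> = (\<Sum>i\<in>\<sigma>. a i * (if card \<sigma> = Suc k then of_nat (fact k) * (\<Prod>j\<in>\<sigma> - {i}. c j) else 0))"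
  proof (rule sum.cong[OF refl])
    fix i assume "i \<in> \<sigma>"
    then have "\<sigma> - {i} \<subseteq> {1..n}" "card (\<sigma> - {i}) = k \<longleftrightarrow> card \<sigma> = Suc k"
      using assms card_Diff_singleton_eq_Suc_iff[OF fin] by blast+
    then show "a i * Poly_Mapping.lookup (linear_form n c ^ k) (sqfree_monom (\<sigma> - {i}))
        = a i * (if card \<sigma> = Suc k then of_nat (fact k) * (\<Prod>j\<in>\<sigma> - {i}. c j) else 0)"
      by (simp only: lookup_linear_form_power)
  qed
  also have "\<dots> = (if card \<sigma> = Suc k then of_nat (fact k) * (\<Sum>i\<in>\<sigma>. a i * (\<Prod>j\<in>\<sigma> - {i}. c j)) else 0)"
    by (simp add: sum_distrib_left ac_simps)
  finally show ?thesis .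
qed

lemma linear_form_in_polyring: "linear_form n a \<in> polyring n"
  unfolding linear_form_def by (rule polyring_sum) (simp add: polyring_mult polyring_var)

lemma lookup_linear_form:
  "Poly_Mapping.lookup (linear_form n a) m = (\<Sum>i\<in>{1..n}. if m = Poly_Mapping.single i 1 then a i else 0)"
  unfolding linear_form_def lookup_sum
  by (intro sum.cong) (auto simp: const_def var_def mult_single lookup_single when_def)

lemma lookup_linear_form_single:
  assumes "j \<in> {1..n}"
  shows "Poly_Mapping.lookup (linear_form n a) (Poly_Mapping.single j 1) = a j"
proof -
  have "(\<Sum>i\<in>{1..n}. if Poly_Mapping.single j (1::nat) = Poly_Mapping.single i 1 then a i else 0)
      = (\<Sum>i\<in>{1..n}. if i = j then a j else 0)"
    unfolding single_1_eq_iff by (intro sum.cong) auto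
  with assms show ?thesis
    by (simp add: lookup_linear_form)
qed

lemma linear_form_in_hom_1: "linear_form n a \<in> (Defs.hom n 1 :: 'k::comm_ring_1 mpoly set)"
proof -
  have "Poly_Mapping.keys (linear_form n a)
      \<subseteq> (\<Union>i\<in>{1..n}. Poly_Mapping.keys (const (a i) * var i :: 'k mpoly))"
    unfolding linear_form_def by (rule keys_sum)
  also have "\<dots> \<subseteq> (\<Union>i\<in>{1..n}. {Poly_Mapping.single i 1})"
    by (auto simp: const_def var_def mult_single)
  finally show ?thesis
    using linear_form_in_polyring by (auto simp: Defs.hom_def)
qed

lemma hom_1_eq_linear_form:
  assumes f: "f \<in> Defs.hom n 1"
  shows "f = linear_form n (\<lambda>i. Poly_Mapping.lookup f (Poly_Mapping.single i 1))"
proof (rule poly_mapping_eqI)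
  fix m
  show "Poly_Mapping.lookup f m
      = Poly_Mapping.lookup (linear_form n (\<lambda>i. Poly_Mapping.lookup f (Poly_Mapping.single i 1))) m"
  proof (cases "\<exists>j\<in>{1..n}. m = Poly_Mapping.single j 1")
    case True
    then obtain j where "j \<in> {1..n}" "m = Poly_Mapping.single j 1" by blast
    then show ?thesis
      by (simp only: lookup_linear_form_single)
  next
    case False
    have "Poly_Mapping.lookup f m = 0"
    proof (rule ccontr)
      assume "Poly_Mapping.lookup f m \<noteq> 0"
      then have "m \<in> Poly_Mapping.keys f"
        by (simp add: in_keys_iff)
      with f have "mdeg m = 1" "Poly_Mapping.keys m \<subseteq> {1..n}"
        by (auto simp: Defs.hom_def polyring_def)
      with False show False
        by (metis mdeg_eq_1_imp_single insert_subset keys_single one_neq_zero)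
    qed
    with False show ?thesis
      by (auto simp: lookup_linear_form intro!: sum.neutral[symmetric])
  qed
qed

section \<open>Left kernels of tall matrices\<close>

lemma left_kernel_nontrivial_nat:
  fixes M :: "nat \<Rightarrow> nat \<Rightarrow> 'k::field"
  assumes "nc \<le> nr" "j0 < nc" "v j0 \<noteq> 0" "\<forall>r<nr. (\<Sum>j<nc. M r j * v j) = 0"
  shows "\<exists>u. (\<exists>r<nr. u r \<noteq> 0) \<and> (\<forall>j<nc. (\<Sum>r<nr. u r * M r j) = 0)"
proof -
  define B where "B = mat nr nr (\<lambda>(r,j). if j < nc then M r j else 0)"
  define w where "w = vec nr (\<lambda>j. if j < nc then v j else 0)"
  have B: "B \<in> carrier_mat nr nr" "transpose_mat B \<in> carrier_mat nr nr"
    by (simp_all add: B_def)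
  have "w \<in> carrier_vec nr" "w \<noteq> 0\<^sub>v nr"
    using assms(1-3) by (auto simp: w_def dest!: arg_cong[of _ _ "\<lambda>x. x $ j0"])
  moreover have "B *\<^sub>v w = 0\<^sub>v nr"
  proof (rule eq_vecI)
    fix r assume "r < dim_vec (0\<^sub>v nr :: 'k vec)"
    then have r: "r < nr" by simp
    have "(B *\<^sub>v w) $ r = (\<Sum>j<nr. (if j < nc then M r j else 0) * (if j < nc then v j else 0))"
      using r by (simp add: B_def w_def scalar_prod_def atLeast0LessThan)
    also have "\<dots> = (\<Sum>j<nc. M r j * v j)"
      using assms(1) by (intro sum.mono_neutral_cong_right) auto
    finally show "(B *\<^sub>v w) $ r = 0\<^sub>v nr $ r"
      using r assms(4) by simp
  qed (simp add: B_def)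
  ultimately have "det B = 0"
    using det_0_iff_vec_prod_zero_field[OF B(1)] by blast
  then have "det (transpose_mat B) = 0"
    using det_transpose[OF B(1)] by simp
  then obtain u where u: "u \<in> carrier_vec nr" "u \<noteq> 0\<^sub>v nr" "transpose_mat B *\<^sub>v u = 0\<^sub>v nr"
    using det_0_iff_vec_prod_zero_field[OF B(2)] by blast
  have "\<exists>r<nr. u $ r \<noteq> 0"
    using u(1,2) by (metis eq_vecI carrier_vecD index_zero_vec(1,2))
  moreover have "(\<Sum>r<nr. u $ r * M r j) = 0" if j: "j < nc" for j
  proof -
    have "(transpose_mat B *\<^sub>v u) $ j = (\<Sum>r<nr. M r j * u $ r)"
      using j assms(1) u(1) by (simp add: B_def scalar_prod_def atLeast0LessThan)
    then show ?thesis
      using u(3) j assms(1) by (simp add: mult.commute)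
  qed
  ultimately show ?thesis by blast
qed

lemma left_kernel_nontrivial:
  fixes M :: "'r \<Rightarrow> 'c \<Rightarrow> 'k::field"
  assumes finite: "finite R" "finite Cs" and size: "card Cs \<le> card R"
    and j0: "j0 \<in> Cs" "v j0 \<noteq> 0" and kernel: "\<forall>r\<in>R. (\<Sum>j\<in>Cs. M r j * v j) = 0"
  shows "\<exists>u. (\<exists>r\<in>R. u r \<noteq> 0) \<and> (\<forall>j\<in>Cs. (\<Sum>r\<in>R. u r * M r j) = 0)"
proof -
  obtain er where er: "bij_betw er {..<card R} R"
    using ex_bij_betw_nat_finite[OF finite(1)] atLeast0LessThan by auto
  obtain ec where ec: "bij_betw ec {..<card Cs} Cs"
    using ex_bij_betw_nat_finite[OF finite(2)] atLeast0LessThan by auto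
  obtain k0 where k0: "k0 < card Cs" "ec k0 = j0"
    using ec j0(1) unfolding bij_betw_def by (metis imageE lessThan_iff)
  have "\<forall>r<card R. (\<Sum>j<card Cs. M (er r) (ec j) * v (ec j)) = 0"
    using kernel er sum.reindex_bij_betw[OF ec, of "\<lambda>j. M (er _) j * v j"]
    by (auto simp: bij_betw_def)
  then obtain u' where u': "\<exists>r<card R. u' r \<noteq> 0"
    "\<forall>j<card Cs. (\<Sum>r<card R. u' r * M (er r) (ec j)) = 0"
    using left_kernel_nontrivial_nat[of "card Cs" "card R" k0 "v \<circ> ec" "\<lambda>r j. M (er r) (ec j)"]
      size k0 j0(2) by auto
  define u where "u = u' \<circ> the_inv_into {..<card R} er"
  have u_er: "u (er r) = u' r" if "r < card R" for r
    using er that by (simp add: u_def bij_betw_def the_inv_into_f_f)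
  obtain r where "r < card R" "u' r \<noteq> 0"
    using u'(1) by blast
  then have "er r \<in> R" "u (er r) \<noteq> 0"
    using er u_er by (auto simp: bij_betw_apply)
  then have "\<exists>r\<in>R. u r \<noteq> 0" by blast
  moreover have "(\<Sum>r\<in>R. u r * M r j) = 0" if "j \<in> Cs" for j
  proof -
    obtain k where k: "k < card Cs" "ec k = j"
      using ec \<open>j \<in> Cs\<close> unfolding bij_betw_def by (metis imageE lessThan_iff)
    have "(\<Sum>r\<in>R. u r * M r j) = (\<Sum>r<card R. u' r * M (er r) (ec k))"
      using sum.reindex_bij_betw[OF er, of "\<lambda>r. u r * M r j"] u_er k(2) by simp
    then show ?thesis
      using u'(2) k(1) by simp
  qed
  ultimately show ?thesis by blast
qed

section \<open>Failure of the strong Lefschetz property\<close>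

lemma exact_transversal_kernel_vector:
  fixes c :: "nat \<Rightarrow> 'k::{idom,ring_char_0}"
  assumes family: "\<And>F. F \<in> \<F> \<Longrightarrow> F \<subseteq> V \<and> card F = d" and "d \<ge> 2" and "\<F> \<noteq> {}"
    and transversal: "\<And>F. F \<in> \<F> \<Longrightarrow> card (F \<inter> C) = 1"
  obtains v i0 where "i0 \<in> V" "v i0 \<noteq> 0" "\<And>F. F \<in> \<F> \<Longrightarrow> (\<Sum>i\<in>F. v i * (\<Prod>j\<in>F - {i}. c j)) = 0"
proof -
  have F: "F \<subseteq> V" "finite F" "card F = d" if "F \<in> \<F>" for F
    using family[OF that] \<open>d \<ge> 2\<close> card.infinite by force+
  show thesis
  proof (cases "\<forall>i\<in>V. c i = 0")
    case True
    have zero: "(\<Prod>j\<in>F - {i}. c j) = 0" if "F \<in> \<F>" for F i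
    proof -
      have "card (F - {i}) \<noteq> 0"
        using F[OF that] \<open>d \<ge> 2\<close> by (simp add: card_Diff_singleton_if)
      then obtain j where "j \<in> F - {i}"
        by (metis card.empty ex_in_conv)
      with True F[OF that] show ?thesis
        by (intro prod_zero) auto
    qed
    then have kernel: "(\<Sum>i\<in>F. 1 * (\<Prod>j\<in>F - {i}. c j)) = 0" if "F \<in> \<F>" for F
      using that by simp
    obtain F i0 where "F \<in> \<F>" "i0 \<in> F"
      using \<open>\<F> \<noteq> {}\<close> F \<open>d \<ge> 2\<close> by fastforce
    then show thesis
      using that[of i0 "\<lambda>_. 1", OF _ _ kernel] F by auto
  next
    case False
    then obtain i0 where i0: "i0 \<in> V" "c i0 \<noteq> 0" by blast
    \<comment> \<open>on every facet the weights \<open>e\<close> add up to \<open>d \<cdot> 1 - d = 0\<close>\<close>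
    define e where "e i = of_nat d * of_bool (i \<in> C) - (1 :: 'k)" for i
    have "(\<Sum>i\<in>F. c i * e i * (\<Prod>j\<in>F - {i}. c j)) = 0" if "F \<in> \<F>" for F
    proof -
      have "(\<Sum>i\<in>F. c i * e i * (\<Prod>j\<in>F - {i}. c j)) = (\<Sum>i\<in>F. e i * (\<Prod>j\<in>F. c j))"
        using F(2)[OF that] by (intro sum.cong) (simp_all add: prod.remove)
      also have "\<dots> = (\<Sum>i\<in>F. e i) * (\<Prod>j\<in>F. c j)"
        by (simp add: sum_distrib_right)
      also have "(\<Sum>i\<in>F. e i) = of_nat d * of_nat (card (F \<inter> C)) - of_nat (card F)"
        using F(2)[OF that] by (simp add: e_def sum_subtractf flip: sum_distrib_left)
      finally show ?thesis
        using transversal[OF that] F(3)[OF that] by simp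
    qed
    moreover have "c i0 * e i0 \<noteq> 0"
      using i0(2) \<open>d \<ge> 2\<close> by (simp add: e_def)
    ultimately show thesis
      using that[of i0 "\<lambda>i. c i * e i"] i0(1) by blast
  qed
qed

lemma power_linear_form_mult_in_A_ideal:
  assumes sc: "simplicial_complex n \<Delta>" and pure: "\<forall>F\<in>facets \<Delta>. card F = Suc k"
    and kernel: "\<And>F. F \<in> facets \<Delta> \<Longrightarrow> (\<Sum>i\<in>F. v i * (\<Prod>j\<in>F - {i}. c j)) = 0"
  shows "linear_form n c ^ k * linear_form n v \<in> (A_ideal n \<Delta> :: 'k::comm_ring_1 mpoly set)"
proof -
  have "Poly_Mapping.lookup (linear_form n c ^ k * linear_form n v) (sqfree_monom \<sigma>) = 0"
    if "\<sigma> \<in> \<Delta>" for \<sigma>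
  proof (cases "card \<sigma> = Suc k")
    case True
    then have "\<sigma> \<in> facets \<Delta>"
      using face_of_facet_size_is_facet[OF sc pure that] by simp
    with True show ?thesis
      unfolding lookup_linear_form_power_mult[OF simplicial_complex_face_subset[OF sc that]]
      using kernel by simp
  next
    case False
    then show ?thesis
      using simplicial_complex_face_subset[OF sc that] by (simp add: lookup_linear_form_power_mult)
  qed
  then show ?thesis
    unfolding A_ideal_eq[OF sc] without_face_terms_def
    by (auto intro!: polyring_mult polyring_power linear_form_in_polyring)
qed

lemma linear_form_notin_A_ideal:
  assumes sc: "simplicial_complex n \<Delta>" and "i0 \<in> {1..n}" "v i0 \<noteq> 0"
  shows "linear_form n v \<notin> (A_ideal n \<Delta> :: 'k::comm_ring_1 mpoly set)"
proof -
  have "Poly_Mapping.lookup (linear_form n v) (sqfree_monom {i0}) \<noteq> 0"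
    unfolding sqfree_monom_singleton lookup_linear_form_single[OF assms(2)] by (rule assms(3))
  then show ?thesis
    unfolding A_ideal_eq[OF sc] without_face_terms_def
    using simplicial_complex_singleton[OF sc assms(2)] by blast
qed

lemma facet_monomial_not_in_image:
  fixes c v :: "nat \<Rightarrow> 'k::field"
  assumes sc: "simplicial_complex n \<Delta>" and pure: "\<forall>F\<in>facets \<Delta>. card F = Suc k"
    and size: "n \<le> card (facets \<Delta>)"
    and kernel: "\<And>F. F \<in> facets \<Delta> \<Longrightarrow> (\<Sum>i\<in>F. v i * (\<Prod>j\<in>F - {i}. c j)) = 0"
    and v: "i0 \<in> {1..n}" "v i0 \<noteq> 0"
  obtains F0 where "F0 \<in> facets \<Delta>"
    "\<forall>f\<in>Defs.hom n 1. xset F0 - linear_form n c ^ k * f \<notin> A_ideal n \<Delta>"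
proof -
  note fin = finite_facets[OF sc]
  \<comment> \<open>the matrix of \<open>\<times>L\<^sup>k: A\<^sub>1 \<rightarrow> A\<^sub>k\<^sub>+\<^sub>1\<close> in the monomial bases, up to the factor \<open>k!\<close>\<close>
  define M where "M F i = of_bool (i \<in> F) * (\<Prod>j\<in>F - {i}. c j)" for F i
  have M_sum: "(\<Sum>i\<in>{1..n}. M F i * a i) = (\<Sum>i\<in>F. a i * (\<Prod>j\<in>F - {i}. c j))"
    if "F \<in> facets \<Delta>" for F a
  proof -
    have "{1..n} \<inter> {i. i \<in> F} = F"
      using facet_subset_vertices[OF sc that] by blast
    then show ?thesis
      unfolding M_def mult.assoc sum_of_bool_mult_eq by (simp add: mult.commute)
  qed
  have "\<exists>u. (\<exists>F\<in>facets \<Delta>. u F \<noteq> 0) \<and> (\<forall>i\<in>{1..n}. (\<Sum>F\<in>facets \<Delta>. u F * M F i) = 0)"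
    by (rule left_kernel_nontrivial[of _ _ i0 v]) (use fin size v kernel M_sum in auto)
  then obtain u where "\<exists>F\<in>facets \<Delta>. u F \<noteq> 0" and u: "\<forall>i\<in>{1..n}. (\<Sum>F\<in>facets \<Delta>. u F * M F i) = 0"
    by blast
  then obtain F0 where F0: "F0 \<in> facets \<Delta>" "u F0 \<noteq> 0" by blast
  have "xset F0 - linear_form n c ^ k * f \<notin> A_ideal n \<Delta>" if f: "f \<in> Defs.hom n 1" for f
  proof
    obtain a where a: "f = linear_form n a"
      using hom_1_eq_linear_form[OF f] by blast
    assume "xset F0 - linear_form n c ^ k * f \<in> A_ideal n \<Delta>"
    then have coeff: "of_bool (F = F0) = of_nat (fact k) * (\<Sum>i\<in>{1..n}. M F i * a i)"
      if F: "F \<in> facets \<Delta>" for F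
    proof -
      have "Poly_Mapping.lookup (xset F0 - linear_form n c ^ k * f) (sqfree_monom F) = 0"
        using \<open>xset F0 - _ \<in> _\<close> facets_subset F unfolding A_ideal_eq[OF sc] without_face_terms_def by blast
      moreover have "Poly_Mapping.lookup (xset F0 :: 'k mpoly) (sqfree_monom F) = of_bool (F = F0)"
        using sqfree_monom_inject[OF finite_facet[OF sc F0(1)] finite_facet[OF sc F]]
        by (auto simp: xset_eq_single lookup_single)
      ultimately show ?thesis
        unfolding M_sum[OF F] using pure F facet_subset_vertices[OF sc F]
        by (simp add: a lookup_minus lookup_linear_form_power_mult)
    qed
    have "u F0 = (\<Sum>F\<in>facets \<Delta>. u F * of_bool (F = F0))"
      using F0(1) fin by simp
    also have "\<dots> = (\<Sum>F\<in>facets \<Delta>. u F * (of_nat (fact k) * (\<Sum>i\<in>{1..n}. M F i * a i)))"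
      by (rule sum.cong[OF refl]) (simp only: coeff)
    also have "\<dots> = of_nat (fact k) * (\<Sum>F\<in>facets \<Delta>. \<Sum>i\<in>{1..n}. u F * M F i * a i)"
      by (simp add: sum_distrib_left ac_simps)
    also have "\<dots> = of_nat (fact k) * (\<Sum>i\<in>{1..n}. (\<Sum>F\<in>facets \<Delta>. u F * M F i) * a i)"
      by (simp add: sum.swap[of _ "facets \<Delta>"] sum_distrib_right)
    also have "\<dots> = 0"
      using u by simp
    finally show False
      using F0(2) by simp
  qed
  with F0(1) show thesis
    using that by blast
qed

lemma exact_transversal_not_strong_lefschetz:
  assumes sc: "simplicial_complex n \<Delta>" and pure: "\<forall>F\<in>facets \<Delta>. card F = d" and "d \<ge> 2"
    and size: "n \<le> card (facets \<Delta>)" and "facets \<Delta> \<noteq> {}"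
    and transversal: "\<forall>F\<in>facets \<Delta>. card (F \<inter> C) = 1"
  shows "\<not> strong_lefschetz n (A_ideal n \<Delta> :: 'k::field_char_0 mpoly set)"
proof
  obtain k where d: "d = Suc k"
    using \<open>d \<ge> 2\<close> by (cases d) auto
  assume "strong_lefschetz n (A_ideal n \<Delta> :: 'k mpoly set)"
  then obtain L :: "'k mpoly" where "L \<in> linear_forms n"
    and "\<forall>i j. full_rank_mult n (A_ideal n \<Delta>) (L ^ j) i j"
    unfolding strong_lefschetz_def by blast
  then obtain c where full_rank: "full_rank_mult n (A_ideal n \<Delta>) (linear_form n c ^ k :: 'k mpoly) 1 k"
    unfolding linear_forms_iff by blast
  obtain v i0 where v: "i0 \<in> {1..n}" "v i0 \<noteq> 0"
    and kernel: "\<And>F. F \<in> facets \<Delta> \<Longrightarrow> (\<Sum>i\<in>F. v i * (\<Prod>j\<in>F - {i}. c j)) = 0"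
    by (rule exact_transversal_kernel_vector[of "facets \<Delta>" "{1..n}" d C c])
       (use facet_subset_vertices[OF sc] pure transversal assms(3,5) in auto)
  from full_rank show False
    unfolding full_rank_mult_def
  proof
    assume "\<forall>f\<in>Defs.hom n 1. linear_form n c ^ k * f \<in> A_ideal n \<Delta> \<longrightarrow> f \<in> A_ideal n \<Delta>"
    then show False
      using linear_form_in_hom_1[of n v] linear_form_notin_A_ideal[OF sc] v
        power_linear_form_mult_in_A_ideal[OF sc pure[unfolded d] kernel] by blast
  next
    obtain F0 where F0: "F0 \<in> facets \<Delta>"
      "\<forall>f\<in>Defs.hom n 1. xset F0 - linear_form n c ^ k * f \<notin> A_ideal n \<Delta>"
      using facet_monomial_not_in_image[OF sc pure[unfolded d] size kernel v] by blast
    moreover have "xset F0 \<in> (Defs.hom n (1 + k) :: 'k mpoly set)"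
      using xset_in_hom[OF facet_subset_vertices[OF sc F0(1)]] pure F0(1) d by simp
    moreover assume "\<forall>h\<in>Defs.hom n (1 + k). \<exists>f\<in>Defs.hom n 1. h - linear_form n c ^ k * f \<in> A_ideal n \<Delta>"
    ultimately show False
      by blast
  qed
qed

theorem theorem5p3:
  fixes n :: nat and \<Delta> :: "nat set set"
  assumes "simplicial_complex n \<Delta>"
    and "pure \<Delta>"
    and "card (facets \<Delta>) \<ge> n"
    and "\<exists>F\<in>facets \<Delta>. card F \<ge> 2"
    and "normally_torsion_free n (facet_ideal n \<Delta> :: 'k::field_char_0 mpoly set)"
  shows "\<not> strong_lefschetz n (A_ideal n \<Delta> :: 'k mpoly set)"
proof -
  obtain F where F: "F \<in> facets \<Delta>" "card F \<ge> 2"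
    using assms(4) by blast
  have pure: "\<forall>G\<in>facets \<Delta>. card G = card F"
    using assms(2) F(1) unfolding pure_def by blast
  obtain C where "\<forall>G\<in>facets \<Delta>. card (G \<inter> C) = 1"
    using normally_torsion_free_imp_exact_transversal[OF assms(1) pure _ assms(5)] F(2) by auto
  then show ?thesis
    using exact_transversal_not_strong_lefschetz[OF assms(1) pure F(2) assms(3)] F(1) by blast
qed

end
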